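(* Let $X$ be a scalar random variable with distribution $\pi$ and upper bound $\ell\in\mathbb{R}$ with $\mathbb{P}_\pi[X\le \ell]=1$. Let $g$ be a closed convex function with $g(1)=0$, let $\beta\ge 0$, and suppose the convex conjugate $g^*$ of $g$ is a real-valued function $g^*:\mathbb{R}\to\mathbb{R}$. Define $L(x,\mu,t) = t\left(\mu + g^*\left(\frac{x}{t}-\mu+\beta\right)\right)$ and suppose $u_b: D\subset\mathbb{R}^2\to\mathbb{R}$ is a function such that $\mathbb{P}_{\pi}[L(X,\mu,t)\le u_b(\mu,t)] = 1$ for all $\mu\in\mathbb{R}$, $t>0$. For $N$ independent samples $x_1,\dots,x_N$ of $X$, let $\zeta^*_N(\mu,t)$ be the solution of $\min_{\zeta\in\mathbb{R}}\zeta$ subject to $\zeta\ge L(x_i,\mu,t)$ for all $i$ (i.e. $\zeta^*_N(\mu,t)=\max_k L(x_k,\mu,t)$). Then for all $\epsilon\in[0,1]$, $\mu\in\mathbb{R}$, $t>0$, \[ \mathbb{P}^N_{\pi}\left[\mathbb{E}_{\pi}[L(X,\mu,t)] \le \zeta^*_N(\mu,t)(1-\epsilon) + u_b(\mu,t)\epsilon\right] \ge 1-(1-\epsilon)^N. \]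
   Context: $\mathbb{P}^N_{\pi}$ denotes the $N$-fold product probability measure governing the i.i.d. sample $(x_1,\dots,x_N)$. The convex conjugate is $g^*(y)=\sup_x (xy - g(x))$. *)

theory Defs
  imports "HOL-Probability.Probability"
begin

definition proper_closed_convex :: "(real \<Rightarrow> ereal) \<Rightarrow> bool" where
  "proper_closed_convex g \<longleftrightarrow>
     (\<forall>x. g x \<noteq> -\<infinity>) \<and>
     convex {p :: real \<times> real. g (fst p) \<le> ereal (snd p)} \<and>
     closed {p :: real \<times> real. g (fst p) \<le> ereal (snd p)}"

definition convex_conjugate :: "(real \<Rightarrow> ereal) \<Rightarrow> real \<Rightarrow> ereal" where
  "convex_conjugate g y = (SUP x. ereal (x * y) - g x)"

definition ereal_expectation :: "'a measure \<Rightarrow> ('a \<Rightarrow> real) \<Rightarrow> ereal" where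
  "ereal_expectation M f =
     enn2ereal (\<integral>\<^sup>+ x. ennreal (max 0 (f x)) \<partial>M) - enn2ereal (\<integral>\<^sup>+ x. ennreal (max 0 (- f x)) \<partial>M)"

end

theory Submission
  imports Defs
begin

text \<open>Let f = L(\<cdot>, \<mu>, t) and u = u_b(\<mu>, t). If E[f] = -\<infinity> there is nothing to prove.
  Otherwise (for \<epsilon> < 1) write E[f] = c (1 - \<epsilon>) + u \<epsilon>, so that the event fails exactly when all N
  samples fall into A = {f < c}. Since f < c on A and f \<le> u almost surely,
  E[f] < u - (u - c) P(A) unless P(A) = 0, which forces P(A) \<le> 1 - \<epsilon>; the failure
  probability P(A)^N is therefore at most (1 - \<epsilon>)^N.\<close>

lemma ereal_expectation_integrable:
  fixes f :: "'a \<Rightarrow> real"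
  assumes "integrable M f"
  shows "ereal_expectation M f = ereal (integral\<^sup>L M f)"
proof -
  obtain r q where "0 \<le> r" "0 \<le> q"
    "(\<integral>\<^sup>+x. ennreal (f x) \<partial>M) = ennreal r" "(\<integral>\<^sup>+x. ennreal (- f x) \<partial>M) = ennreal q"
    "integral\<^sup>L M f = r - q"
    using integrableE[OF assms] by metis
  then show ?thesis
    by (simp add: ereal_expectation_def ennreal_max_0 enn2ereal_ennreal)
qed

lemma ereal_expectation_not_integrable:
  fixes f :: "'a \<Rightarrow> real"
  assumes "finite_measure M" "f \<in> borel_measurable M" "AE x in M. f x \<le> u"
    and "\<not> integrable M f"
  shows "ereal_expectation M f = -\<infinity>"
proof -
  interpret finite_measure M by fact
  have "(\<integral>\<^sup>+x. ennreal (f x) \<partial>M) \<le> (\<integral>\<^sup>+x. ennreal u \<partial>M)"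
    using assms(3) by (intro nn_integral_mono_AE) (auto elim!: eventually_mono intro: ennreal_leI)
  also have "\<dots> < \<infinity>"
    by (simp add: ennreal_mult_eq_top_iff less_top[symmetric])
  finally have "(\<integral>\<^sup>+x. ennreal (f x) \<partial>M) \<noteq> \<infinity>"
    by simp
  with assms(2,4) have "(\<integral>\<^sup>+x. ennreal (- f x) \<partial>M) = \<infinity>"
    by (simp add: real_integrable_def)
  with \<open>(\<integral>\<^sup>+x. ennreal (f x) \<partial>M) \<noteq> \<infinity>\<close> show ?thesis
    by (cases "\<integral>\<^sup>+x. ennreal (f x) \<partial>M" rule: ennreal_cases)
      (auto simp: ereal_expectation_def ennreal_max_0 enn2ereal_ennreal)
qed

lemma convex_on_convex_conjugate:
  assumes "\<And>y. convex_conjugate g y = ereal (gs y)"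
  shows "convex_on UNIV gs"
proof (rule convex_onI)
  fix a y1 y2 :: real
  assume a: "0 < a" "a < 1"
  have affine_below: "ereal (z * y) - g z \<le> ereal (gs y)" for z y
    unfolding assms[symmetric] convex_conjugate_def by (rule SUP_upper) simp
  have "ereal (z * ((1 - a) *\<^sub>R y1 + a *\<^sub>R y2)) - g z \<le> ereal ((1 - a) * gs y1 + a * gs y2)" for z
  proof (cases "g z")
    case (real r)
    have "z * y1 - r \<le> gs y1" "z * y2 - r \<le> gs y2"
      using affine_below[of z y1] affine_below[of z y2] real by auto
    then have "(1 - a) * (z * y1 - r) + a * (z * y2 - r) \<le> (1 - a) * gs y1 + a * gs y2"
      using a by (intro add_mono mult_left_mono) auto
    then show ?thesis
      using real by (simp add: algebra_simps)
  next
    case MInf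
    then show ?thesis
      using affine_below[of z y1] by simp
  qed simp
  then have "convex_conjugate g ((1 - a) *\<^sub>R y1 + a *\<^sub>R y2) \<le> ereal ((1 - a) * gs y1 + a * gs y2)"
    unfolding convex_conjugate_def by (rule SUP_least)
  then show "gs ((1 - a) *\<^sub>R y1 + a *\<^sub>R y2) \<le> (1 - a) * gs y1 + a * gs y2"
    by (simp add: assms)
qed simp

lemma (in prob_space) prob_less_threshold_le:
  fixes f :: "'a \<Rightarrow> real"
  assumes f: "integrable M f" "AE x in M. f x \<le> u"
    and "\<epsilon> < 1" and mean: "integral\<^sup>L M f = c * (1 - \<epsilon>) + u * \<epsilon>"
  shows "prob {x \<in> space M. f x < c} \<le> 1 - \<epsilon>"
proof -
  define A where "A = {x \<in> space M. f x < c}"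
  have A: "A \<in> sets M"
    unfolding A_def using f(1) by measurable
  have "c * (1 - \<epsilon>) \<le> u * (1 - \<epsilon>)"
    using integral_le_const[OF f] mean by (simp add: algebra_simps)
  then have "c \<le> u"
    using \<open>\<epsilon> < 1\<close> by simp
  show ?thesis
  proof (cases "prob A = 0")
    case False
    have "integral\<^sup>L M f < integral\<^sup>L M (\<lambda>x. u - (u - c) * indicator A x)"
    proof (rule integral_less_AE[OF f(1) _ _ A])
      show "integrable M (\<lambda>x. u - (u - c) * indicator A x)"
        using A by (intro Bochner_Integration.integrable_diff integrable_real_mult_indicator) auto
      show "emeasure M A \<noteq> 0"
        using False by (simp add: emeasure_eq_measure)
      show "AE x in M. x \<in> A \<longrightarrow> f x \<noteq> u - (u - c) * indicator A x"
        by (simp add: A_def)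
      show "AE x in M. f x \<le> u - (u - c) * indicator A x"
        using f(2) by eventually_elim (auto simp: A_def indicator_def)
    qed
    also have "\<dots> = u - (u - c) * prob A"
      using A by (subst Bochner_Integration.integral_diff) (auto simp: prob_space less_top[symmetric])
    finally have "(u - c) * prob A < (u - c) * (1 - \<epsilon>)"
      using mean by (simp add: algebra_simps)
    then show ?thesis
      unfolding A_def using \<open>c \<le> u\<close> by (simp add: mult_less_cancel_left)
  qed (use \<open>\<epsilon> < 1\<close> in \<open>simp add: A_def\<close>)
qed

lemma (in prob_space) prob_Max_samples_ge:
  fixes f :: "'a \<Rightarrow> real"
  assumes f: "f \<in> borel_measurable M" and "N > 0"
  shows "measure (PiM {..<N} (\<lambda>_. M))
           {xs \<in> space (PiM {..<N} (\<lambda>_. M)). c \<le> Max ((\<lambda>k. f (xs k)) ` {..<N})}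
         = 1 - prob {x \<in> space M. f x < c} ^ N"
proof -
  interpret P: finite_product_prob_space "\<lambda>_. M" "{..<N}"
  proof (rule finite_product_prob_space.intro[OF finite_product_sigma_finite.intro product_prob_spaceI])
    show "product_sigma_finite (\<lambda>_. M)"
      by unfold_locales
  qed (simp_all add: finite_product_sigma_finite_axioms_def prob_space_axioms)
  define A where "A = {x \<in> space M. f x < c}"
  have A: "A \<in> sets M"
    unfolding A_def using f by measurable
  have "{xs \<in> space (PiM {..<N} (\<lambda>_. M)). c \<le> Max ((\<lambda>k. f (xs k)) ` {..<N})}
      = space (PiM {..<N} (\<lambda>_. M)) - PiE {..<N} (\<lambda>_. A)"
  proof (intro set_eqI iffI)
    fix xs
    assume xs: "xs \<in> {xs \<in> space (PiM {..<N} (\<lambda>_. M)). c \<le> Max ((\<lambda>k. f (xs k)) ` {..<N})}"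
    obtain k where "k < N" "c \<le> f (xs k)"
      using xs \<open>N > 0\<close> by (subst (asm) Max_ge_iff) auto
    then have "xs \<notin> PiE {..<N} (\<lambda>_. A)"
      by (force simp: PiE_iff A_def)
    with xs show "xs \<in> space (PiM {..<N} (\<lambda>_. M)) - PiE {..<N} (\<lambda>_. A)"
      by blast
  next
    fix xs
    assume xs: "xs \<in> space (PiM {..<N} (\<lambda>_. M)) - PiE {..<N} (\<lambda>_. A)"
    then have xs_space: "xs \<in> PiE {..<N} (\<lambda>_. space M)" "xs \<notin> PiE {..<N} (\<lambda>_. A)"
      by (simp_all add: space_PiM)
    then obtain k where "k < N" "xs k \<notin> A"
      unfolding PiE_iff by blast
    with xs_space(1) have "c \<le> f (xs k)"
      unfolding A_def by (force simp: PiE_iff)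
    also have "f (xs k) \<le> Max ((\<lambda>k. f (xs k)) ` {..<N})"
      using \<open>k < N\<close> by (intro Max_ge) auto
    finally show "xs \<in> {xs \<in> space (PiM {..<N} (\<lambda>_. M)). c \<le> Max ((\<lambda>k. f (xs k)) ` {..<N})}"
      using xs by blast
  qed
  moreover have "P.prob (PiE {..<N} (\<lambda>_. A)) = prob A ^ N"
    using A by (simp add: P.prob_times)
  moreover have "PiE {..<N} (\<lambda>_. A) \<in> sets (PiM {..<N} (\<lambda>_. M))"
    using A by (intro sets_PiM_I_finite) auto
  ultimately show ?thesis
    unfolding A_def by (simp add: P.prob_compl)
qed
theorem (in prob_space) sample_Max_bound_ereal_expectation:
  fixes f :: "'a \<Rightarrow> real"
  assumes f: "f \<in> borel_measurable M" "AE x in M. f x \<le> u"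
    and "0 \<le> \<epsilon>" "\<epsilon> \<le> 1"
  shows "measure (PiM {..<N} (\<lambda>_. M))
           {xs \<in> space (PiM {..<N} (\<lambda>_. M)).
              ereal_expectation M f \<le> ereal (Max ((\<lambda>k. f (xs k)) ` {..<N}) * (1 - \<epsilon>) + u * \<epsilon>)}
         \<ge> 1 - (1 - \<epsilon>) ^ N"
    (is "measure ?P ?event \<ge> _")
proof -
  interpret P: prob_space ?P
    by (intro prob_space_PiM prob_space_axioms)
  have almost_sure: "measure ?P ?event \<ge> 1 - (1 - \<epsilon>) ^ N" if "?event = space ?P"
    using that \<open>\<epsilon> \<le> 1\<close> by (simp add: P.prob_space)
  show ?thesis
  proof (cases "integrable M f")
    case False
    then show ?thesis
      using ereal_expectation_not_integrable[OF finite_measure_axioms f] by (intro almost_sure) simp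
  next
    case True
    define e where "e = integral\<^sup>L M f"
    have E: "ereal_expectation M f = ereal e"
      unfolding e_def using True by (rule ereal_expectation_integrable)
    have "e \<le> u"
      unfolding e_def using True f(2) by (rule integral_le_const)
    consider "N = 0" | "\<epsilon> = 1" | "N > 0" "\<epsilon> < 1"
      using \<open>\<epsilon> \<le> 1\<close> by fastforce
    then show ?thesis
    proof cases
      case 2
      then show ?thesis
        using E \<open>e \<le> u\<close> by (intro almost_sure) simp
    next
      case 3
      define c where "c = (e - u * \<epsilon>) / (1 - \<epsilon>)"
      have mean: "e = c * (1 - \<epsilon>) + u * \<epsilon>"
        using \<open>\<epsilon> < 1\<close> by (simp add: c_def field_simps)
      have "?event = {xs \<in> space ?P. c \<le> Max ((\<lambda>k. f (xs k)) ` {..<N})}"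
        using E mean \<open>\<epsilon> < 1\<close> by simp
      then have "measure ?P ?event = 1 - prob {x \<in> space M. f x < c} ^ N"
        using prob_Max_samples_ge[OF f(1) \<open>N > 0\<close>] by simp
      moreover have "prob {x \<in> space M. f x < c} ^ N \<le> (1 - \<epsilon>) ^ N"
        using prob_less_threshold_le[OF True f(2) \<open>\<epsilon> < 1\<close>] mean unfolding e_def
        by (intro power_mono) auto
      ultimately show ?thesis
        by simp
    qed simp
  qed
qed

theorem lemma1:
  fixes \<pi> :: "real measure" and l :: real and g :: "real \<Rightarrow> ereal"
    and gs :: "real \<Rightarrow> real" and \<beta> :: real and ub :: "real \<Rightarrow> real \<Rightarrow> real"
    and L :: "real \<Rightarrow> real \<Rightarrow> real \<Rightarrow> real" and N :: nat
    and \<epsilon> \<mu> t :: real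
  assumes "prob_space \<pi>" and "sets \<pi> = sets borel"
    and "AE x in \<pi>. x \<le> l"
    and "proper_closed_convex g" and "g 1 = 0" and "\<beta> \<ge> 0"
    and "\<And>y. convex_conjugate g y = ereal (gs y)"
    and "\<And>x m s. L x m s = s * (m + gs (x / s - m + \<beta>))"
    and "\<And>m s. s > 0 \<Longrightarrow> AE x in \<pi>. L x m s \<le> ub m s"
    and "0 \<le> \<epsilon>" and "\<epsilon> \<le> 1" and "t > 0"
  shows "measure (PiM {..<N} (\<lambda>_. \<pi>))
           {xs \<in> space (PiM {..<N} (\<lambda>_. \<pi>)).
              ereal_expectation \<pi> (\<lambda>x. L x \<mu> t)
                \<le> ereal (Max ((\<lambda>k. L (xs k) \<mu> t) ` {..<N}) * (1 - \<epsilon>) + ub \<mu> t * \<epsilon>)}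
         \<ge> 1 - (1 - \<epsilon>) ^ N"
proof -
  interpret prob_space \<pi> by fact
  have "continuous_on UNIV gs"
    using convex_on_convex_conjugate[OF assms(7)] by (rule convex_on_continuous[OF open_UNIV])
  then have [measurable]: "gs \<in> borel_measurable borel"
    by (rule borel_measurable_continuous_onI)
  have "(\<lambda>x. L x \<mu> t) \<in> borel_measurable borel"
    unfolding assms(8) by measurable
  then have "(\<lambda>x. L x \<mu> t) \<in> borel_measurable \<pi>"
    by (simp add: measurable_cong_sets[OF assms(2) refl])
  then show ?thesis
    using sample_Max_bound_ereal_expectation assms(9)[OF \<open>t > 0\<close>] assms(10,11) by blast
qed

end
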